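(* For every uniform discrete traffic crossing instance on the torus with congestion $\chi$, the worst-case asymptotic delay rate of an optimal scheduler satisfies $\rho_{opt}\ge \chi/(1+\chi)$.
   Context: Setting: a $W\times W$ square region $R$ of the integer grid, $W$ even, is embedded on a torus (a vehicle leaving $R$ on one side reappears instantly in the same lane on the opposite side). There are $m_x$ vertical lanes (vertical grid lines) and $m_y$ horizontal lanes, each assigned a direction. Vehicles occupy grid points on lanes and move along their lane in its direction; time is discrete, and at each step each vehicle either advances one unit or stays; a collision occurs if two vehicles occupy the same grid point at the same time. Intersections are crossing points of a horizontal and a vertical lane. The instance is uniform if every lane contains the same number $n'$ of vehicles (initial positions within lanes arbitrary); $p=n'/W$ is the density and $\chi=\max(0,2p-1)$ is the congestion. A vehicle experiences a delay at time $t$ if it does not move at that step; the delay rate of a collision-free schedule at time $t$ is the maximum (over vehicles) total delay up to time $t$ divided by $t$, and its asymptotic delay rate is the limit superior of the delay rate as $t\to\infty$. $\rho_{opt}=\rho_{opt}(W,p,m_x,m_y)$ denotes the worst-case (over uniform instances of this form) asymptotic delay rate achieved by an optimum (collision-free) scheduler. *)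

theory Defs
  imports "HOL-Analysis.Analysis"
begin

text \<open>A vehicle is a pair (lane, k) with k < n', n' the number of vehicles per lane.
  Grid points of the torus are pairs of integers in {0..<W}.\<close>

datatype lane = VL nat | HL nat

type_synonym vehicle = "lane \<times> nat"

record traffic_inst =
  vx   :: "nat \<Rightarrow> nat"       \<comment> \<open>x-coordinate of vertical lane i\<close>
  dirV :: "nat \<Rightarrow> bool"      \<comment> \<open>True: moves towards increasing y\<close>
  hy   :: "nat \<Rightarrow> nat"       \<comment> \<open>y-coordinate of horizontal lane j\<close>
  dirH :: "nat \<Rightarrow> bool"      \<comment> \<open>True: moves towards increasing x\<close>
  pos0 :: "vehicle \<Rightarrow> nat"   \<comment> \<open>initial coordinate along the lane\<close>

definition vehicles :: "nat \<Rightarrow> nat \<Rightarrow> nat \<Rightarrow> vehicle set" where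
  "vehicles mx my n = ({VL i | i. i < mx} \<union> {HL j | j. j < my}) \<times> {..<n}"

definition lane_sign :: "traffic_inst \<Rightarrow> lane \<Rightarrow> int" where
  "lane_sign I l = (case l of VL i \<Rightarrow> (if dirV I i then 1 else -1)
                            | HL j \<Rightarrow> (if dirH I j then 1 else -1))"

definition gridpt :: "nat \<Rightarrow> traffic_inst \<Rightarrow> vehicle \<Rightarrow> nat \<Rightarrow> int \<times> int" where
  "gridpt W I v d =
     (let c = (int (pos0 I v) + lane_sign I (fst v) * int d) mod int W in
      case fst v of VL i \<Rightarrow> (int (vx I i), c) | HL j \<Rightarrow> (c, int (hy I j)))"

definition uniform_instance :: "nat \<Rightarrow> nat \<Rightarrow> nat \<Rightarrow> nat \<Rightarrow> traffic_inst \<Rightarrow> bool" where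
  "uniform_instance W mx my n I \<longleftrightarrow>
     (\<forall>i<mx. vx I i < W) \<and> inj_on (vx I) {..<mx} \<and>
     (\<forall>j<my. hy I j < W) \<and> inj_on (hy I) {..<my} \<and>
     (\<forall>v\<in>vehicles mx my n. pos0 I v < W) \<and>
     inj_on (\<lambda>v. gridpt W I v 0) (vehicles mx my n)"

text \<open>A schedule says, for each vehicle and each step t (from time t to t+1),
  whether the vehicle advances one unit.\<close>
type_synonym schedule = "vehicle \<Rightarrow> nat \<Rightarrow> bool"

definition travelled :: "schedule \<Rightarrow> vehicle \<Rightarrow> nat \<Rightarrow> nat" where
  "travelled \<sigma> v t = card {s. s < t \<and> \<sigma> v s}"

definition collision_free :: "nat \<Rightarrow> nat \<Rightarrow> nat \<Rightarrow> nat \<Rightarrow> traffic_inst \<Rightarrow> schedule \<Rightarrow> bool" where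
  "collision_free W mx my n I \<sigma> \<longleftrightarrow>
     (\<forall>t. inj_on (\<lambda>v. gridpt W I v (travelled \<sigma> v t)) (vehicles mx my n))"

definition max_delay :: "nat \<Rightarrow> nat \<Rightarrow> nat \<Rightarrow> schedule \<Rightarrow> nat \<Rightarrow> nat" where
  "max_delay mx my n \<sigma> t = Max (insert 0 ((\<lambda>v. t - travelled \<sigma> v t) ` vehicles mx my n))"

definition asym_delay_rate :: "nat \<Rightarrow> nat \<Rightarrow> nat \<Rightarrow> schedule \<Rightarrow> ereal" where
  "asym_delay_rate mx my n \<sigma> =
     limsup (\<lambda>t. ereal (real (max_delay mx my n \<sigma> t) / real t))"

definition rho_opt :: "nat \<Rightarrow> nat \<Rightarrow> nat \<Rightarrow> nat \<Rightarrow> ereal" where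
  "rho_opt W n mx my =
     (SUP I \<in> {I. uniform_instance W mx my n I}.
        INF \<sigma> \<in> {\<sigma>. collision_free W mx my n I \<sigma>}. asym_delay_rate mx my n \<sigma>)"

definition density :: "nat \<Rightarrow> nat \<Rightarrow> real" where
  "density W n = real n / real W"

definition congestion :: "nat \<Rightarrow> nat \<Rightarrow> real" where
  "congestion W n = max 0 (2 * density W n - 1)"

end

theory Submission imports Defs begin

text \<open>Fix a vertical and a horizontal lane and their intersection P. A vehicle that has advanced
  d units along its lane has passed P at least d div W times, and by collision freedom the 2n
  vehicles of the two lanes are never at P simultaneously, so up to time t they share at most
  t + 1 visits. If no vehicle is delayed more than D steps, each has advanced at least t - D
  units, hence 2n ((t - D) div W) \<le> t + 1, i.e. D \<ge> (1 - W/(2n)) t - O(1); and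
  1 - W/(2n) = \<chi>/(1 + \<chi>) as soon as 2n > W.\<close>

lemma travelled_0 [simp]: "travelled \<sigma> v 0 = 0"
  by (simp add: travelled_def)

lemma travelled_Suc: "travelled \<sigma> v (Suc t) = travelled \<sigma> v t + (if \<sigma> v t then 1 else 0)"
proof -
  have "{s. s < Suc t \<and> \<sigma> v s} = {s. s < t \<and> \<sigma> v s} \<union> (if \<sigma> v t then {t} else {})"
    using less_Suc_eq by auto
  then show ?thesis
    unfolding travelled_def by (auto simp: card_insert_if)
qed

lemma travelled_le: "travelled \<sigma> v t \<le> t"
proof -
  have "{s. s < t \<and> \<sigma> v s} \<subseteq> {..<t}" by auto
  then show ?thesis
    unfolding travelled_def by (metis card_lessThan card_mono finite_lessThan)
qed

lemma travelled_attains: "d \<le> travelled \<sigma> v t \<Longrightarrow> \<exists>s\<le>t. travelled \<sigma> v s = d"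
proof (induction t)
  case 0
  then show ?case by simp
next
  case (Suc t)
  show ?case
  proof (cases "d \<le> travelled \<sigma> v t")
    case True
    then show ?thesis using Suc.IH le_SucI by blast
  next
    case False
    then have "d = travelled \<sigma> v (Suc t)"
      using Suc.prems travelled_Suc[of \<sigma> v t] by (auto split: if_splits)
    then show ?thesis by blast
  qed
qed

text \<open>Vehicles advance by at most one unit per step, so every distance up to the one
  travelled by time t is reached at some time s \<le> t.\<close>
lemma card_distances_le_card_times:
  "card {d. d \<le> travelled \<sigma> v t \<and> P d} \<le> card {s. s \<le> t \<and> P (travelled \<sigma> v s)}"
proof -
  have "{d. d \<le> travelled \<sigma> v t \<and> P d} \<subseteq> travelled \<sigma> v ` {s. s \<le> t \<and> P (travelled \<sigma> v s)}"
    using travelled_attains by blast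
  then have "card {d. d \<le> travelled \<sigma> v t \<and> P d}
      \<le> card (travelled \<sigma> v ` {s. s \<le> t \<and> P (travelled \<sigma> v s)})"
    by (intro card_mono) auto
  also have "\<dots> \<le> card {s. s \<le> t \<and> P (travelled \<sigma> v s)}"
    by (intro card_image_le) auto
  finally show ?thesis .
qed

text \<open>The hits are r, r + W, r + 2W, \<dots> with r the residue of sg (c - p0).\<close>
lemma card_residue_hits:
  fixes p0 c sg :: int
  assumes W: "W > 0" and c: "0 \<le> c" "c < int W" and sg: "sg = 1 \<or> sg = -1"
  shows "T div W \<le> card {d. d \<le> T \<and> (p0 + sg * int d) mod int W = c}"
proof -
  define r where "r = nat ((sg * (c - p0)) mod int W)"
  have r_less: "r < W" and r_int: "int r = (sg * (c - p0)) mod int W"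
    using W unfolding r_def by (simp_all add: nat_less_iff)
  have hits: "r + k * W \<in> {d. d \<le> T \<and> (p0 + sg * int d) mod int W = c}" if "k < T div W" for k
  proof -
    have "Suc k * W \<le> T div W * W" using that by (meson Suc_leI mult_le_mono1)
    also have "\<dots> \<le> T" by simp
    finally have "r + k * W \<le> T" using r_less by simp
    moreover have "p0 + sg * int (r + k * W) = (p0 + sg * int r) + (sg * int k) * int W"
      by (simp add: algebra_simps)
    then have "(p0 + sg * int (r + k * W)) mod int W = (p0 + sg * int r) mod int W"
      by (metis add.commute mod_mult_self1 mult.commute)
    moreover have "(p0 + sg * int r) mod int W = (p0 + sg * (sg * (c - p0))) mod int W"
      unfolding r_int by (metis mod_add_right_eq mod_mult_right_eq)
    moreover have "(p0 + sg * (sg * (c - p0))) mod int W = c"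
      using sg c by auto
    ultimately show ?thesis by simp
  qed
  have "inj_on (\<lambda>k. r + k * W) {..<T div W}"
    using W by (simp add: inj_on_def)
  then have "T div W = card ((\<lambda>k. r + k * W) ` {..<T div W})"
    by (simp add: card_image)
  also have "\<dots> \<le> card {d. d \<le> T \<and> (p0 + sg * int d) mod int W = c}"
    using hits by (intro card_mono) auto
  finally show ?thesis .
qed

lemma lane_sign_cases: "lane_sign I l = 1 \<or> lane_sign I l = -1"
  unfolding lane_sign_def by (auto split: lane.splits)

lemma finite_vehicles: "finite (vehicles mx my n)"
proof -
  have "{VL i | i. i < mx} = VL ` {..<mx}" "{HL j | j. j < my} = HL ` {..<my}" by auto
  then show ?thesis unfolding vehicles_def by simp
qed

definition crossing :: "traffic_inst \<Rightarrow> nat \<Rightarrow> nat \<Rightarrow> int \<times> int" where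
  "crossing I i j = (int (vx I i), int (hy I j))"

definition visits :: "nat \<Rightarrow> traffic_inst \<Rightarrow> schedule \<Rightarrow> vehicle \<Rightarrow> int \<times> int \<Rightarrow> nat \<Rightarrow> nat set" where
  "visits W I \<sigma> v P t = {s. s \<le> t \<and> gridpt W I v (travelled \<sigma> v s) = P}"

lemma visits_subset: "visits W I \<sigma> v P t \<subseteq> {..t}"
  unfolding visits_def by auto

lemma gridpt_eq_crossing_iff:
  assumes "fst v = VL i \<or> fst v = HL j"
  shows "gridpt W I v d = crossing I i j \<longleftrightarrow>
    (int (pos0 I v) + lane_sign I (fst v) * int d) mod int W
      = (if fst v = VL i then int (hy I j) else int (vx I i))"
  using assms unfolding gridpt_def crossing_def Let_def by auto

lemma card_visits_crossing_ge:
  assumes W: "W > 0" and "vx I i < W" "hy I j < W" and lane: "fst v = VL i \<or> fst v = HL j"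
  shows "travelled \<sigma> v t div W \<le> card (visits W I \<sigma> v (crossing I i j) t)"
proof -
  define c where "c = (if fst v = VL i then int (hy I j) else int (vx I i))"
  have c: "0 \<le> c" "c < int W" using assms unfolding c_def by auto
  have "travelled \<sigma> v t div W
      \<le> card {d. d \<le> travelled \<sigma> v t
               \<and> (int (pos0 I v) + lane_sign I (fst v) * int d) mod int W = c}"
    by (rule card_residue_hits[OF W c lane_sign_cases])
  also have "\<dots> \<le> card (visits W I \<sigma> v (crossing I i j) t)"
    using card_distances_le_card_times
    unfolding visits_def gridpt_eq_crossing_iff[OF lane] c_def .
  finally show ?thesis .
qed

lemma visits_disjoint:
  assumes "collision_free W mx my n I \<sigma>"
    and "v \<in> vehicles mx my n" "w \<in> vehicles mx my n" "v \<noteq> w"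
  shows "visits W I \<sigma> v P t \<inter> visits W I \<sigma> w P t = {}"
  using assms unfolding collision_free_def visits_def by (auto dest: inj_onD)

lemma travelled_ge_sub_max_delay:
  assumes "v \<in> vehicles mx my n"
  shows "t - max_delay mx my n \<sigma> t \<le> travelled \<sigma> v t"
proof -
  have "t - travelled \<sigma> v t \<le> max_delay mx my n \<sigma> t"
    unfolding max_delay_def using assms finite_vehicles by (intro Max_ge) auto
  then show ?thesis using travelled_le[of \<sigma> v t] by linarith
qed

lemma max_delay_le: "max_delay mx my n \<sigma> t \<le> t"
  unfolding max_delay_def using finite_vehicles by (subst Max_le_iff) auto

lemma crossing_capacity:
  assumes W: "W > 0" and ij: "i < mx" "j < my"
    and U: "uniform_instance W mx my n I" and cf: "collision_free W mx my n I \<sigma>"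
  shows "2 * n * ((t - max_delay mx my n \<sigma> t) div W) \<le> t + 1"
proof -
  define V where "V = {VL i, HL j} \<times> {..<n}"
  have V_sub: "V \<subseteq> vehicles mx my n" unfolding V_def vehicles_def using ij by auto
  have "card V = 2 * n" unfolding V_def by (simp add: card_cartesian_product)
  then have "2 * n * ((t - max_delay mx my n \<sigma> t) div W)
      = (\<Sum>v\<in>V. (t - max_delay mx my n \<sigma> t) div W)" by simp
  also have "\<dots> \<le> (\<Sum>v\<in>V. card (visits W I \<sigma> v (crossing I i j) t))"
  proof (intro sum_mono)
    fix v assume v: "v \<in> V"
    have "(t - max_delay mx my n \<sigma> t) div W \<le> travelled \<sigma> v t div W"
      using v V_sub by (intro div_le_mono travelled_ge_sub_max_delay) auto
    also have "\<dots> \<le> card (visits W I \<sigma> v (crossing I i j) t)"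
    proof (rule card_visits_crossing_ge[OF W])
      show "vx I i < W" "hy I j < W" using U ij unfolding uniform_instance_def by blast+
      show "fst v = VL i \<or> fst v = HL j" using v unfolding V_def by auto
    qed
    finally show "(t - max_delay mx my n \<sigma> t) div W \<le> card (visits W I \<sigma> v (crossing I i j) t)" .
  qed
  also have "\<dots> = card (\<Union>v\<in>V. visits W I \<sigma> v (crossing I i j) t)"
  proof (rule card_UN_disjoint[symmetric])
    show "finite V" unfolding V_def by simp
    show "\<forall>v\<in>V. finite (visits W I \<sigma> v (crossing I i j) t)"
      by (blast intro: finite_subset[OF visits_subset finite_atMost])
    show "\<forall>v\<in>V. \<forall>w\<in>V. v \<noteq> w \<longrightarrow>
        visits W I \<sigma> v (crossing I i j) t \<inter> visits W I \<sigma> w (crossing I i j) t = {}"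
      using visits_disjoint[OF cf] V_sub by blast
  qed
  also have "\<dots> \<le> card {..t}"
    by (intro card_mono finite_atMost UN_least visits_subset)
  finally show ?thesis by simp
qed

lemma delay_lower_bound_of_capacity:
  assumes W: "W > 0" and n: "n > 0" and "D \<le> t"
    and cap: "2 * n * ((t - D) div W) \<le> t + 1"
  shows "real t * (1 - real W / (2 * real n)) - (real W / (2 * real n) + real W) \<le> real D"
proof -
  define q where "q = (t - D) div W"
  define x where "x = real W / (2 * real n)"
  have "t - D = W * q + (t - D) mod W" unfolding q_def by simp
  moreover have "(t - D) mod W < W" using W by simp
  ultimately have "t - D < W * q + W" by linarith
  then have "real t - real D < real W * real q + real W"
    using \<open>D \<le> t\<close> by (simp add: of_nat_diff flip: of_nat_mult of_nat_add)
  moreover have "real W * real q \<le> real t * x + x"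
  proof -
    have "real (2 * n * q) \<le> real (t + 1)"
      using cap unfolding q_def by (simp only: of_nat_le_iff)
    then have "real q \<le> (real t + 1) / (2 * real n)"
      using n by (simp add: pos_le_divide_eq mult_ac)
    then have "real W * real q \<le> real W * ((real t + 1) / (2 * real n))"
      by (rule mult_left_mono) simp
    also have "\<dots> = real t * x + x"
      unfolding x_def by (simp add: add_divide_distrib distrib_left)
    finally show ?thesis .
  qed
  ultimately show ?thesis
    unfolding x_def[symmetric] by (simp add: right_diff_distrib)
qed

lemma ereal_le_limsup_of_tendsto:
  fixes f g :: "nat \<Rightarrow> real"
  assumes le: "\<And>t. t \<ge> 1 \<Longrightarrow> g t \<le> f t" and lim: "g \<longlonglongrightarrow> a"
  shows "ereal a \<le> limsup (\<lambda>t. ereal (f t))"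
proof -
  have "ereal a = limsup (\<lambda>t. ereal (g t))"
    by (rule lim_imp_Limsup[symmetric]) (auto intro: tendsto_ereal lim)
  also have "\<dots> \<le> limsup (\<lambda>t. ereal (f t))"
    by (rule Limsup_mono) (auto simp: eventually_sequentially intro!: exI[of _ 1] le)
  finally show ?thesis .
qed

lemma congestion_ratio:
  assumes "W > 0" and "2 * n > W"
  shows "congestion W n / (1 + congestion W n) = 1 - real W / (2 * real n)"
proof -
  have sum: "1 + congestion W n = 2 * real n / real W"
    using assms unfolding congestion_def density_def by (simp add: field_simps)
  then have "1 + congestion W n > 0" using assms by simp
  then have "congestion W n / (1 + congestion W n) = 1 - 1 / (1 + congestion W n)"
    by (simp add: field_simps)
  then show ?thesis unfolding sum by simp
qed

lemma congestion_eq_0: "W > 0 \<Longrightarrow> 2 * n \<le> W \<Longrightarrow> congestion W n = 0"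
  unfolding congestion_def density_def by (simp add: field_simps)

lemma asym_delay_rate_ge_congestion_ratio:
  assumes W: "W > 0" and ij: "i < mx" "j < my"
    and U: "uniform_instance W mx my n I" and cf: "collision_free W mx my n I \<sigma>"
  shows "ereal (congestion W n / (1 + congestion W n)) \<le> asym_delay_rate mx my n \<sigma>"
proof (cases "2 * n \<le> W")
  case True
  then show ?thesis
    unfolding asym_delay_rate_def congestion_eq_0[OF W True]
    by (simp add: ereal_le_limsup_of_tendsto[where g = "\<lambda>_. 0"])
next
  case False
  define a where "a = 1 - real W / (2 * real n)"
  define c where "c = real W / (2 * real n) + real W"
  have n: "n > 0" using False by simp
  have "a - c / real t \<le> real (max_delay mx my n \<sigma> t) / real t" if "t \<ge> 1" for t
  proof -
    have "real t * a - c \<le> real (max_delay mx my n \<sigma> t)"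
      unfolding a_def c_def
      by (rule delay_lower_bound_of_capacity[OF W n max_delay_le crossing_capacity[OF W ij U cf]])
    then have "(real t * a - c) / real t \<le> real (max_delay mx my n \<sigma> t) / real t"
      by (intro divide_right_mono) auto
    then show ?thesis
      using that by (simp add: diff_divide_distrib)
  qed
  moreover have "(\<lambda>t. a - c / real t) \<longlonglongrightarrow> a"
    using tendsto_diff[OF tendsto_const lim_const_over_n[of c]] by simp
  ultimately have "ereal a \<le> asym_delay_rate mx my n \<sigma>"
    unfolding asym_delay_rate_def by (rule ereal_le_limsup_of_tendsto)
  moreover have "congestion W n / (1 + congestion W n) = a"
    unfolding a_def using False by (intro congestion_ratio[OF W]) simp
  ultimately show ?thesis by simp
qed

theorem mainTheorem9:
  fixes W n mx my :: nat and I :: traffic_inst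
  assumes "even W" and "W > 0" and "mx \<ge> 1" and "my \<ge> 1"
    and "uniform_instance W mx my n I"
  shows "ereal (congestion W n / (1 + congestion W n)) \<le> rho_opt W n mx my"
proof -
  have "ereal (congestion W n / (1 + congestion W n))
      \<le> (INF \<sigma>\<in>{\<sigma>. collision_free W mx my n I \<sigma>}. asym_delay_rate mx my n \<sigma>)"
    using asym_delay_rate_ge_congestion_ratio[of W 0 mx 0 my n I] assms
    by (intro INF_greatest) auto
  then show ?thesis
    unfolding rho_opt_def using assms(5) by (intro SUP_upper2[where i = I]) auto
qed

end
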